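(* For all integers $m,n,k$ with $n\ge1$, $0\le m\le n$ and $k\ge0$, $$\sum_{j=0}^{n-1}A_{n,n-1,j}\sum_{l\ge0}\mathcal P^+_{m+j}(k,l)=\mathcal P^+_{m+n-1}(k,0)+(xy)^{n-1}\sum_{l\ge0}\mathcal P_m(0,n-k+l).$$
   Context: Three-step paths consist of up-steps $(1,1)$, level steps $(1,0)$ and down-steps $(1,-1)$. Weights: $w((1,1))=1$, $w((1,0))=x+y$, $w((1,-1))=xy$, and the weight $w(P)$ of a path is the product of the weights of its steps. $\mathcal P_n(k,l)=\sum_P w(P)$ over all three-step paths from $(0,k)$ to $(n,l)$ (zero if no such path); $\mathcal P^+_n(k,l)$ is the same sum restricted to paths never running below the $x$-axis. The last row of the matrix $A(n)$ is: $A_{n,n-1,n-1}=\frac{xy-(n-1)(x+y)}{xy}$ and, for $0\le j\le n-2$, $$A_{n,n-1,j}=\frac{(-1)^{n+j}}{xy}\sum_{l=j}^{n}\left(\binom lj\binom{n+j-1-l}{j}x^{l-j}y^{n-1-l}+\binom lj\binom{n+j-l}{j}x^{l-j}y^{n-l}\right),$$ with binomial coefficients $\binom ab$ equal to $0$ if $b<0$ or $a<b$. *)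

theory Defs
  imports Main
begin

text \<open>Three-step paths of length n are encoded by their list of vertical
increments, each in {-1,0,1}: 1 = up-step (1,1), 0 = level step (1,0),
-1 = down-step (1,-1).\<close>

definition steps :: "nat \<Rightarrow> int list set" where
  "steps n = {s. length s = n \<and> set s \<subseteq> {-1, 0, 1}}"

definition step_weight :: "'a::field \<Rightarrow> 'a \<Rightarrow> int \<Rightarrow> 'a" where
  "step_weight x y d = (if d = 1 then 1 else if d = 0 then x + y else x * y)"

definition path_weight :: "'a::field \<Rightarrow> 'a \<Rightarrow> int list \<Rightarrow> 'a" where
  "path_weight x y s = prod_list (map (step_weight x y) s)"

definition PP :: "'a::field \<Rightarrow> 'a \<Rightarrow> nat \<Rightarrow> int \<Rightarrow> int \<Rightarrow> 'a" where
  "PP x y n k l = (\<Sum>s\<in>{s \<in> steps n. k + sum_list s = l}. path_weight x y s)"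

definition PPplus :: "'a::field \<Rightarrow> 'a \<Rightarrow> nat \<Rightarrow> int \<Rightarrow> int \<Rightarrow> 'a" where
  "PPplus x y n k l = (\<Sum>s\<in>{s \<in> steps n. k + sum_list s = l \<and>
        (\<forall>i\<le>n. 0 \<le> k + sum_list (take i s))}. path_weight x y s)"

definition sum_nonneg :: "(int \<Rightarrow> 'a::comm_monoid_add) \<Rightarrow> 'a" where
  "sum_nonneg f = sum f {l. 0 \<le> l \<and> f l \<noteq> 0}"

definition binom :: "int \<Rightarrow> int \<Rightarrow> int" where
  "binom a b = (if b < 0 \<or> a < b then 0 else int (nat a choose nat b))"

definition A_last :: "'a::field \<Rightarrow> 'a \<Rightarrow> nat \<Rightarrow> nat \<Rightarrow> 'a" where
  "A_last x y n j =
    (if j = n - 1 then (x * y - of_nat (n - 1) * (x + y)) / (x * y)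
     else ((-1) ^ (n + j) / (x * y)) *
       (\<Sum>l\<in>{int j..int n}.
          of_int (binom l (int j) * binom (int n + int j - 1 - l) (int j))
            * x powi (l - int j) * y powi (int n - 1 - l)
        + of_int (binom l (int j) * binom (int n + int j - l) (int j))
            * x powi (l - int j) * y powi (int n - l)))"

end

theory Submission
  imports Defs "HOL-Computational_Algebra.Formal_Power_Series"
begin

unbundle fps_syntax

text \<open>Writing \<open>P_M(k,l) = w_M(l - k)\<close>, the reflection principle gives
  \<open>P\<^sup>+_M(k,l) = w_M(l - k) - (xy)^(k+1) w_M(l + k + 2)\<close>, and \<open>w_M(-d) = (xy)^d w_M(d)\<close>.
  The binomial sums in \<open>A_{n,n-1,j}\<close> are the coefficients \<open>e_{n,j}\<close> of \<open>t^n\<close> in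
  \<open>t^j / ((1 - xt)(1 - yt))^(j+1)\<close>, whose recurrence gives
  \<open>\<Sum>_j (-1)^j e_{n,j} T^j = (-1)^n H_n\<close> for the one-step transfer operator \<open>T\<close> and
  \<open>H_n f(i) = \<Sum>_t (xy)^t f(i - n + 2t)\<close>. Hence the last row of \<open>A(n)\<close> applied to the
  \<open>T^j w_m\<close> yields \<open>(xy)^n w_m(\<cdot> + n)\<close> plus a difference, which telescopes in the sum
  over \<open>l \<ge> 0\<close>; by the symmetry of \<open>H_{n-1} w_m\<close> and \<open>w_{m+n-1}\<close> the two remaining
  boundary terms combine into \<open>P\<^sup>+_{m+n-1}(k,0)\<close>.\<close>

section \<open>Recurrences for path sums\<close>

lemma finite_steps: "finite (steps n)"
proof -
  have "steps n = {s. set s \<subseteq> {-1, 0, 1} \<and> length s = n}"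
    by (auto simp: steps_def)
  then show ?thesis
    by (simp add: finite_lists_length_eq)
qed

lemma steps_0: "steps 0 = {[]}"
  by (auto simp: steps_def)

lemma steps_Suc: "steps (Suc n) = (\<lambda>(d, s). d # s) ` ({-1, 0, 1} \<times> steps n)"
proof -
  have "s \<in> (\<lambda>(d, s). d # s) ` ({-1, 0, 1} \<times> steps n)" if "s \<in> steps (Suc n)" for s
    using that by (cases s) (auto simp: steps_def image_iff)
  then show ?thesis
    by (auto simp: steps_def)
qed

lemma step_weight_simps [simp]:
  "step_weight x y (-1) = x * y" "step_weight x y 0 = x + y" "step_weight x y 1 = 1"
  by (simp_all add: step_weight_def)

lemma path_weight_Nil [simp]: "path_weight x y [] = 1"
  and path_weight_Cons [simp]: "path_weight x y (d # s) = step_weight x y d * path_weight x y s"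
  by (simp_all add: path_weight_def)

lemma sum_path_weight_steps_Suc:
  "(\<Sum>s\<in>{s \<in> steps (Suc n). P s}. path_weight x y s)
   = (\<Sum>d\<in>{-1, 0, 1}. step_weight x y d * (\<Sum>s\<in>{s \<in> steps n. P (d # s)}. path_weight x y s))"
proof -
  let ?S = "SIGMA d:{-1::int, 0, 1}. {s \<in> steps n. P (d # s)}"
  have image: "{s \<in> steps (Suc n). P s} = (\<lambda>(d, s). d # s) ` ?S"
    by (auto simp: steps_Suc)
  have "inj_on (\<lambda>(d, s). d # s) ?S"
    by (auto simp: inj_on_def)
  then have "(\<Sum>s\<in>{s \<in> steps (Suc n). P s}. path_weight x y s)
      = (\<Sum>(d, s)\<in>?S. step_weight x y d * path_weight x y s)"
    unfolding image by (simp add: sum.reindex case_prod_unfold)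
  also have "\<dots> = (\<Sum>d\<in>{-1, 0, 1}. \<Sum>s\<in>{s \<in> steps n. P (d # s)}. step_weight x y d * path_weight x y s)"
    by (rule sum.Sigma[symmetric]) (auto simp: finite_steps)
  finally show ?thesis
    by (simp add: sum_distrib_left)
qed

lemma PP_0: "PP x y 0 k l = (if k = l then 1 else 0)"
proof -
  have "{s \<in> steps 0. k + sum_list s = l} = (if k = l then {[]} else {})"
    by (auto simp: steps_0)
  then show ?thesis
    by (simp add: PP_def)
qed

lemma PP_Suc:
  "PP x y (Suc n) k l = x * y * PP x y n (k - 1) l + (x + y) * PP x y n k l + PP x y n (k + 1) l"
  unfolding PP_def sum_path_weight_steps_Suc
  by (simp add: add.commute add.left_commute add_diff_eq diff_add_eq)

lemma PPplus_0: "PPplus x y 0 k l = (if k = l \<and> 0 \<le> k then 1 else 0)"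
proof -
  have "{s \<in> steps 0. k + sum_list s = l \<and> (\<forall>i\<le>0. 0 \<le> k + sum_list (take i s))}
      = (if k = l \<and> 0 \<le> k then {[]} else {})"
    by (auto simp: steps_0)
  then show ?thesis
    by (simp add: PPplus_def)
qed

lemma PPplus_Suc:
  "PPplus x y (Suc n) k l =
    (if k < 0 then 0
     else x * y * PPplus x y n (k - 1) l + (x + y) * PPplus x y n k l + PPplus x y n (k + 1) l)"
proof -
  have all_le_Suc: "(\<forall>i\<le>Suc n. Q i) \<longleftrightarrow> Q 0 \<and> (\<forall>i\<le>n. Q (Suc i))" for Q
    by (metis Suc_le_mono le0 not0_implies_Suc)
  have cons: "(k + sum_list (d # s) = l \<and> (\<forall>i\<le>Suc n. 0 \<le> k + sum_list (take i (d # s))))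
      \<longleftrightarrow> 0 \<le> k \<and> (k + d + sum_list s = l \<and> (\<forall>i\<le>n. 0 \<le> k + d + sum_list (take i s)))" for d s
    unfolding all_le_Suc by (auto simp: algebra_simps)
  show ?thesis
    unfolding PPplus_def sum_path_weight_steps_Suc cons
    by (cases "k < 0") (simp_all add: add.commute add.left_commute add_diff_eq diff_add_eq)
qed

section \<open>The transfer operator and the reflection principle\<close>

definition transfer :: "'a::field \<Rightarrow> 'a \<Rightarrow> (int \<Rightarrow> 'a) \<Rightarrow> int \<Rightarrow> 'a" where
  "transfer x y f i = f (i - 1) + (x + y) * f i + x * y * f (i + 1)"

definition delta :: "int \<Rightarrow> 'a::zero_neq_one" where
  "delta i = (if i = 0 then 1 else 0)"

definition walk :: "'a::field \<Rightarrow> 'a \<Rightarrow> nat \<Rightarrow> int \<Rightarrow> 'a" where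
  "walk x y n = (transfer x y ^^ n) delta"

lemma walk_0: "walk x y 0 = delta"
  by (simp add: walk_def)

lemma walk_Suc: "walk x y (Suc n) = transfer x y (walk x y n)"
  by (simp add: walk_def)

lemma funpow_transfer_walk: "(transfer x y ^^ j) (walk x y n) = walk x y (n + j)"
  unfolding walk_def by (simp add: add.commute[of n j] funpow_add)

lemma PP_eq_walk: "PP x y n k l = walk x y n (l - k)"
proof (induction n arbitrary: k)
  case 0
  then show ?case
    by (simp add: PP_0 walk_0 delta_def)
next
  case (Suc n)
  then show ?case
    by (simp add: PP_Suc walk_Suc transfer_def algebra_simps diff_diff_eq2)
qed

lemma funpow_transfer_eq_0:
  assumes "\<And>i. K < i \<Longrightarrow> f i = 0" and "K + int j < i"
  shows "(transfer x y ^^ j) f i = 0"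
  using assms(2)
proof (induction j arbitrary: i)
  case 0
  then show ?case
    using assms(1) by simp
next
  case (Suc j)
  then show ?case
    by (simp add: transfer_def)
qed

lemma walk_eq_0: "int n < i \<Longrightarrow> walk x y n i = 0"
  unfolding walk_def by (rule funpow_transfer_eq_0[where K = 0]) (simp_all add: delta_def)

text \<open>Reflection principle: \<open>l + k + 2\<close> is the mirror image of \<open>l\<close> in the line at
  height \<open>-1\<close>. The case \<open>k = -1\<close> is included so that the induction on the length closes.\<close>

lemma PPplus_eq_walk:
  assumes "0 \<le> l" and "-1 \<le> k"
  shows "PPplus x y n k l = walk x y n (l - k) - (x * y) ^ nat (k + 1) * walk x y n (l + k + 2)"
  using assms(2)
proof (induction n arbitrary: k)
  case 0
  then show ?case
    using assms(1) by (auto simp: PPplus_0 walk_0 delta_def)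
next
  case (Suc n)
  show ?case
  proof (cases "k = -1")
    case True
    then show ?thesis
      by (simp add: PPplus_Suc add.commute)
  next
    case False
    then have k: "0 \<le> k"
      using Suc.prems by simp
    have IH1: "PPplus x y n (k - 1) l = walk x y n (l + 1 - k) - (x * y) ^ nat k * walk x y n (l + k + 1)"
      using Suc.IH[of "k - 1"] k by (simp add: diff_diff_eq2 add_diff_eq ac_simps)
    have IH2: "PPplus x y n k l = walk x y n (l - k) - (x * y) ^ nat (k + 1) * walk x y n (l + k + 2)"
      using Suc.IH[of k] k by simp
    have IH3: "PPplus x y n (k + 1) l = walk x y n (l - k - 1) - (x * y) ^ nat (k + 1 + 1) * walk x y n (l + k + 2 + 1)"
      using Suc.IH[of "k + 1"] k by (simp add: add.assoc diff_diff_eq)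
    have pow: "(x * y) ^ nat (k + 1) = x * y * (x * y) ^ nat k"
      "(x * y) ^ nat (k + 1 + 1) = x * y * (x * y) * (x * y) ^ nat k"
      using k by (simp_all add: nat_add_distrib)
    have "PPplus x y (Suc n) k l
        = x * y * PPplus x y n (k - 1) l + (x + y) * PPplus x y n k l + PPplus x y n (k + 1) l"
      using k by (simp add: PPplus_Suc)
    also have "\<dots> = walk x y (Suc n) (l - k) - (x * y) ^ nat (k + 1) * walk x y (Suc n) (l + k + 2)"
      unfolding IH1 IH2 IH3 walk_Suc transfer_def pow by (simp add: algebra_simps)
    finally show ?thesis .
  qed
qed

section \<open>Reflective functions\<close>

definition q_reflective :: "'a::comm_ring_1 \<Rightarrow> (int \<Rightarrow> 'a) \<Rightarrow> bool" where
  "q_reflective q f \<longleftrightarrow> (\<forall>d::nat. f (- int d) = q ^ d * f (int d))"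

lemma q_reflectiveD: "q_reflective q f \<Longrightarrow> 0 \<le> i \<Longrightarrow> f (- i) = q ^ nat i * f i"
  unfolding q_reflective_def by (metis int_nat_eq)

lemma q_reflective_lincomb:
  "q_reflective q f \<Longrightarrow> q_reflective q g \<Longrightarrow> q_reflective q (\<lambda>i. a * f i + b * g i)"
  by (simp add: q_reflective_def algebra_simps)

lemma q_reflective_shift_sum:
  assumes "q_reflective q f"
  shows "q_reflective q (\<lambda>i. f (i - 1) + q * f (i + 1))"
  unfolding q_reflective_def
proof
  fix d :: nat
  show "f (- int d - 1) + q * f (- int d + 1) = q ^ d * (f (int d - 1) + q * f (int d + 1))"
  proof (cases d)
    case 0
    then show ?thesis
      by simp
  next
    case (Suc e)
    have "f (- int d - 1) = q ^ Suc d * f (int d + 1)"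
      using q_reflectiveD[OF assms, of "int d + 1"] by (simp add: nat_add_distrib)
    moreover have "f (- int d + 1) = q ^ e * f (int d - 1)"
      using assms[unfolded q_reflective_def, rule_format, of e] Suc by (simp add: algebra_simps)
    ultimately show ?thesis
      using Suc by (simp add: algebra_simps)
  qed
qed

lemma q_reflective_transfer:
  assumes "q_reflective (x * y) f"
  shows "q_reflective (x * y) (transfer x y f)"
proof -
  have "transfer x y f = (\<lambda>i. 1 * (f (i - 1) + x * y * f (i + 1)) + (x + y) * f i)"
    by (auto simp: transfer_def fun_eq_iff algebra_simps)
  then show ?thesis
    using q_reflective_lincomb[OF q_reflective_shift_sum[OF assms] assms, of 1 "x + y"] by simp
qed

lemma q_reflective_walk: "q_reflective (x * y) (walk x y n)"
proof (induction n)
  case 0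
  then show ?case
    by (simp add: q_reflective_def walk_0 delta_def)
next
  case (Suc n)
  then show ?case
    by (simp add: walk_Suc q_reflective_transfer)
qed

text \<open>\<open>hop q n f i = (\<Sum>t\<le>n. q ^ t * f (i - n + 2 * t))\<close>; it is the operator that the
  last row of \<open>A(n)\<close> produces from the powers of \<open>transfer\<close>.\<close>

fun hop :: "'a::comm_ring_1 \<Rightarrow> nat \<Rightarrow> (int \<Rightarrow> 'a) \<Rightarrow> int \<Rightarrow> 'a" where
  "hop q 0 f = f"
| "hop q (Suc n) f = (\<lambda>i. hop q n f (i - 1) + q ^ Suc n * f (i + int (Suc n)))"

lemma hop_Suc_Suc:
  "hop q (Suc (Suc n)) f i = hop q (Suc n) f (i - 1) + q * hop q (Suc n) f (i + 1) - q * hop q n f i"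
  by (simp add: algebra_simps)

lemma q_reflective_hop:
  assumes "q_reflective q f"
  shows "q_reflective q (hop q n f)"
proof (induction n rule: induct_nat_012)
  case 0
  then show ?case
    using assms by simp
next
  case 1
  then show ?case
    using q_reflective_shift_sum[OF assms] by simp
next
  case (ge2 n)
  have "hop q (Suc (Suc n)) f
      = (\<lambda>i. 1 * (hop q (Suc n) f (i - 1) + q * hop q (Suc n) f (i + 1)) + (- q) * hop q n f i)"
    by (simp add: fun_eq_iff hop_Suc_Suc del: hop.simps)
  then show ?case
    using q_reflective_lincomb[OF q_reflective_shift_sum[OF ge2(2)] ge2(1), of 1 "- q"] by simp
qed

lemma hop_eq_0:
  assumes "\<And>i. K < i \<Longrightarrow> f i = 0" and "K + int n < i"
  shows "hop q n f i = 0"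
  using assms(2)
proof (induction n arbitrary: i)
  case 0
  then show ?case
    using assms(1) by simp
next
  case (Suc n)
  then show ?case
    using assms(1) by simp
qed

section \<open>The coefficients of the last row\<close>

text \<open>\<open>inv_pow_fps a j = 1 / (1 - a X) ^ (j + 1)\<close>.\<close>

definition inv_pow_fps :: "'a::field \<Rightarrow> nat \<Rightarrow> 'a fps" where
  "inv_pow_fps a j = Abs_fps (\<lambda>i. of_nat ((i + j) choose j) * a ^ i)"

lemma one_minus_X_mult_nth:
  fixes a :: "'a::field"
  shows "((1 - fps_const a * fps_X) * F) $ i = F $ i - a * (if i = 0 then 0 else F $ (i - 1))"
proof -
  have "(1 - fps_const a * fps_X) * F = F - fps_const a * (fps_X * F)"
    by (simp add: algebra_simps)
  then show ?thesis
    by simp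
qed

lemma one_minus_X_mult_inv_pow_fps_Suc:
  "(1 - fps_const a * fps_X) * inv_pow_fps a (Suc j) = inv_pow_fps a j"
proof (rule fps_ext)
  fix i
  show "((1 - fps_const a * fps_X) * inv_pow_fps a (Suc j)) $ i = inv_pow_fps a j $ i"
  proof (cases i)
    case 0
    then show ?thesis
      by (simp add: one_minus_X_mult_nth inv_pow_fps_def binomial_eq_0)
  next
    case (Suc i')
    have "of_nat ((i + Suc j) choose Suc j) * a ^ i - a * (of_nat ((i' + Suc j) choose Suc j) * a ^ i')
        = (of_nat ((i + j) choose j) * a ^ i :: 'a)"
      using Suc by (simp add: algebra_simps)
    then show ?thesis
      using Suc by (simp add: one_minus_X_mult_nth inv_pow_fps_def)
  qed
qed

lemma one_minus_X_mult_inv_pow_fps_0: "(1 - fps_const a * fps_X) * inv_pow_fps a 0 = 1"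
proof (rule fps_ext)
  fix i
  show "((1 - fps_const a * fps_X) * inv_pow_fps a 0) $ i = 1 $ i"
    by (cases i) (simp_all add: one_minus_X_mult_nth inv_pow_fps_def)
qed

definition ecoeff :: "'a::field \<Rightarrow> 'a \<Rightarrow> nat \<Rightarrow> nat \<Rightarrow> 'a" where
  "ecoeff x y n j = (if j \<le> n then (inv_pow_fps x j * inv_pow_fps y j) $ (n - j) else 0)"

lemma ecoeff_eq_0: "n < j \<Longrightarrow> ecoeff x y n j = 0"
  by (simp add: ecoeff_def)

lemma ecoeff_diag: "ecoeff x y n n = 1"
  by (simp add: ecoeff_def inv_pow_fps_def)

lemma ecoeff_Suc_diag: "ecoeff x y (Suc n) n = of_nat (Suc n) * (x + y)"
  by (simp add: ecoeff_def inv_pow_fps_def algebra_simps)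

lemma ecoeff_Suc_Suc:
  "ecoeff x y (Suc (Suc n)) j = (if j = 0 then 0 else ecoeff x y (Suc n) (j - 1))
      + (x + y) * ecoeff x y (Suc n) j - x * y * ecoeff x y n j"
proof (cases "j \<le> Suc (Suc n)")
  case False
  then show ?thesis
    by (simp add: ecoeff_def)
next
  case True
  define D where "D = (\<lambda>F :: 'a fps. (1 - fps_const x * fps_X) * ((1 - fps_const y * fps_X) * F))"
  define G where "G j = inv_pow_fps x j * inv_pow_fps y j" for j
  have D_nth: "D F $ i = F $ i - (x + y) * (if i = 0 then 0 else F $ (i - 1))
      + x * y * (if i < 2 then 0 else F $ (i - 2))" for F i
    unfolding D_def one_minus_X_mult_nth by (cases i; cases "i - 1") (auto simp: algebra_simps)
  have D_G: "D (G 0) = 1" "D (G (Suc j')) = G j'" for j'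
  proof -
    have "D (G k) = ((1 - fps_const x * fps_X) * inv_pow_fps x k) * ((1 - fps_const y * fps_X) * inv_pow_fps y k)"
      for k
      by (simp add: D_def G_def mult_ac)
    then show "D (G 0) = 1" "D (G (Suc j')) = G j'"
      by (simp_all add: G_def one_minus_X_mult_inv_pow_fps_0 one_minus_X_mult_inv_pow_fps_Suc)
  qed
  define i where "i = Suc (Suc n) - j"
  show ?thesis
  proof (cases j)
    case 0
    have "D (G 0) $ i = 0"
      using 0 by (simp add: D_G i_def)
    then show ?thesis
      using 0 by (simp add: D_nth i_def ecoeff_def G_def algebra_simps)
  next
    case (Suc j')
    have "D (G (Suc j')) $ i = G j' $ i"
      by (simp add: D_G)
    then show ?thesis
      unfolding D_nth using Suc i_def True
      by (auto simp: ecoeff_def G_def Suc_diff_le diff_diff_add split: if_splits)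
        (simp_all add: algebra_simps eq_diff_eq diff_eq_eq)
  qed
qed

lemma ecoeff_eq_binomial_sum:
  assumes "j \<le> n"
  shows "(\<Sum>l\<in>{int j..int n}. of_int (binom l (int j) * binom (int n + int j - l) (int j))
            * x powi (l - int j) * y powi (int n - l)) = ecoeff x y n j"
proof -
  have image: "{int j..int n} = (\<lambda>i. int j + int i) ` {0..n - j}"
  proof
    show "{int j..int n} \<subseteq> (\<lambda>i. int j + int i) ` {0..n - j}"
    proof
      fix l
      assume "l \<in> {int j..int n}"
      then have "l = int j + int (nat (l - int j))" "nat (l - int j) \<in> {0..n - j}"
        by auto
      then show "l \<in> (\<lambda>i. int j + int i) ` {0..n - j}"
        by blast
    qed
  qed (use assms in auto)
  have inj: "inj_on (\<lambda>i. int j + int i) {0..n - j}"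
    by (auto simp: inj_on_def)
  have "(\<Sum>l\<in>{int j..int n}. of_int (binom l (int j) * binom (int n + int j - l) (int j))
            * x powi (l - int j) * y powi (int n - l))
     = (\<Sum>i\<in>{0..n - j}. of_nat ((i + j) choose j) * x ^ i * (of_nat ((n - j - i + j) choose j) * y ^ (n - j - i)))"
    unfolding image sum.reindex[OF inj] comp_def
  proof (rule sum.cong[OF refl])
    fix i
    assume i: "i \<in> {0..n - j}"
    have binom_1: "binom (int j + int i) (int j) = int ((i + j) choose j)"
      by (simp add: binom_def nat_add_distrib add.commute)
    have diff: "int n + int j - (int j + int i) = int (n - j - i + j)" "j \<le> n - j - i + j"
      using i assms by auto
    have binom_2: "binom (int n + int j - (int j + int i)) (int j) = int ((n - j - i + j) choose j)"
      unfolding diff(1) using diff(2) by (simp add: binom_def nat_int_add)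
    have "int n - (int j + int i) = int (n - j - i)"
      using i assms by auto
    then have power_y: "y powi (int n - (int j + int i)) = y ^ (n - j - i)"
      by (metis power_int_of_nat)
    have power_x: "x powi (int j + int i - int j) = x ^ i"
      by simp
    show "of_int (binom (int j + int i) (int j) * binom (int n + int j - (int j + int i)) (int j))
            * x powi (int j + int i - int j) * y powi (int n - (int j + int i))
        = of_nat ((i + j) choose j) * x ^ i * (of_nat ((n - j - i + j) choose j) * y ^ (n - j - i))"
      unfolding binom_1 binom_2 power_x power_y by simp
  qed
  also have "\<dots> = ecoeff x y n j"
    using assms by (simp add: ecoeff_def fps_mult_nth inv_pow_fps_def atLeast0AtMost mult_ac)
  finally show ?thesis .
qed

lemma alternating_ecoeff_transfer:
  "(\<Sum>j\<le>n. (-1) ^ j * ecoeff x y n j * (transfer x y ^^ j) f i) = (-1) ^ n * hop (x * y) n f i"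
proof -
  define L where "L n i = (\<Sum>j\<le>n. (-1) ^ j * ecoeff x y n j * (transfer x y ^^ j) f i)" for n i
  have L_Suc_Suc: "L (Suc (Suc n)) i = - L (Suc n) (i - 1) - x * y * L (Suc n) (i + 1) - x * y * L n i"
    for n i
  proof -
    let ?W = "\<lambda>j. (transfer x y ^^ j) f i"
    have "L (Suc (Suc n)) i =
       (\<Sum>j\<le>Suc (Suc n). (-1) ^ j * (if j = 0 then 0 else ecoeff x y (Suc n) (j - 1)) * ?W j)
       + (x + y) * (\<Sum>j\<le>Suc (Suc n). (-1) ^ j * ecoeff x y (Suc n) j * ?W j)
       - x * y * (\<Sum>j\<le>Suc (Suc n). (-1) ^ j * ecoeff x y n j * ?W j)"
      unfolding L_def ecoeff_Suc_Suc
      by (simp add: sum_distrib_left sum.distrib sum_subtractf algebra_simps)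
    also have "(\<Sum>j\<le>Suc (Suc n). (-1) ^ j * (if j = 0 then 0 else ecoeff x y (Suc n) (j - 1)) * ?W j)
        = (\<Sum>j\<le>Suc n. (-1) ^ Suc j * ecoeff x y (Suc n) j * ?W (Suc j))"
      by (subst sum.atMost_Suc_shift) simp
    also have "\<dots> = - L (Suc n) (i - 1) - (x + y) * L (Suc n) i - x * y * L (Suc n) (i + 1)"
      by (simp add: L_def transfer_def sum_distrib_left sum.distrib sum_subtractf algebra_simps sum_negf)
    also have "(\<Sum>j\<le>Suc (Suc n). (-1) ^ j * ecoeff x y (Suc n) j * ?W j) = L (Suc n) i"
      by (simp add: L_def ecoeff_eq_0)
    also have "(\<Sum>j\<le>Suc (Suc n). (-1) ^ j * ecoeff x y n j * ?W j) = L n i"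
      by (simp add: L_def ecoeff_eq_0)
    finally show ?thesis
      by (simp add: algebra_simps)
  qed
  have "L n i = (-1) ^ n * hop (x * y) n f i" for i
  proof (induction n arbitrary: i rule: induct_nat_012)
    case 0
    then show ?case
      by (simp add: L_def ecoeff_diag)
  next
    case 1
    then show ?case
      using ecoeff_Suc_diag[of x y 0] by (simp add: L_def ecoeff_diag transfer_def algebra_simps)
  next
    case (ge2 n)
    then show ?case
      unfolding L_Suc_Suc hop_Suc_Suc[of "x * y" n f i] by (simp add: algebra_simps del: hop.simps)
  qed
  then show ?thesis
    by (simp add: L_def)
qed

lemma A_last_eq_ecoeff:
  assumes "j < n - 1"
  shows "A_last x y n j = ((-1) ^ (n + j) / (x * y)) * (ecoeff x y (n - 1) j + ecoeff x y n j)"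
proof -
  let ?T1 = "\<lambda>l. of_int (binom l (int j) * binom (int n + int j - 1 - l) (int j))
            * x powi (l - int j) * y powi (int n - 1 - l)"
  let ?T2 = "\<lambda>l. of_int (binom l (int j) * binom (int n + int j - l) (int j))
            * x powi (l - int j) * y powi (int n - l)"
  have "{int j..int n} = insert (int n) {int j..int (n - 1)}" "int n \<notin> {int j..int (n - 1)}"
    using assms by auto
  moreover have "?T1 (int n) = 0"
    by (simp add: binom_def)
  ultimately have "sum ?T1 {int j..int n} = sum ?T1 {int j..int (n - 1)}"
    by simp
  also have "\<dots> = ecoeff x y (n - 1) j"
    using ecoeff_eq_binomial_sum[of j "n - 1" x y] assms by (simp add: of_nat_diff algebra_simps)
  finally have "sum ?T1 {int j..int n} = ecoeff x y (n - 1) j" .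
  moreover have "sum ?T2 {int j..int n} = ecoeff x y n j"
    using ecoeff_eq_binomial_sum[of j n x y] assms by simp
  ultimately show ?thesis
    using assms by (simp add: A_last_def sum.distrib)
qed

lemma A_last_transfer:
  fixes x y :: "'a::field"
  assumes "x \<noteq> 0" and "y \<noteq> 0"
  shows "x * y * (\<Sum>j<Suc n. A_last x y (Suc n) j * (transfer x y ^^ j) f i)
     = hop (x * y) (Suc n) f i - hop (x * y) n f i - (transfer x y ^^ Suc n) f i
       + (1 + x) * (1 + y) * (transfer x y ^^ n) f i"
proof -
  let ?W = "\<lambda>j. (transfer x y ^^ j) f i"
  let ?H = "\<lambda>n. hop (x * y) n f i"
  define s :: 'a where "s = (-1) ^ n"
  have s: "s * s = 1"
    by (simp add: s_def flip: power_mult_distrib)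
  have row: "x * y * A_last x y (Suc n) j = - s * ((-1) ^ j * ecoeff x y n j + (-1) ^ j * ecoeff x y (Suc n) j)"
    if "j < n" for j
    using that assms by (simp add: A_last_eq_ecoeff s_def power_add field_simps)
  have sum_n: "(\<Sum>j<n. (-1) ^ j * ecoeff x y n j * ?W j) = s * ?H n - s * ?W n"
    using alternating_ecoeff_transfer[of x y n f i]
    by (simp add: lessThan_Suc_atMost[symmetric] ecoeff_diag s_def algebra_simps)
  have sum_Suc_n: "(\<Sum>j<n. (-1) ^ j * ecoeff x y (Suc n) j * ?W j)
      = - s * ?H (Suc n) + s * ?W (Suc n) - s * of_nat (Suc n) * (x + y) * ?W n"
    using alternating_ecoeff_transfer[of x y "Suc n" f i]
    by (simp add: lessThan_Suc_atMost[symmetric] ecoeff_diag ecoeff_Suc_diag s_def algebra_simps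
        del: hop.simps of_nat_Suc)
  have split: "x * y * (\<Sum>j<Suc n. A_last x y (Suc n) j * ?W j)
      = (\<Sum>j<n. x * y * A_last x y (Suc n) j * ?W j) + x * y * A_last x y (Suc n) n * ?W n"
    by (simp add: sum_distrib_left distrib_left mult.assoc)
  have diag: "x * y * A_last x y (Suc n) n = x * y - of_nat n * (x + y)"
    using assms by (simp add: A_last_def)
  have "(\<Sum>j<n. x * y * A_last x y (Suc n) j * ?W j)
      = (\<Sum>j<n. - s * ((-1) ^ j * ecoeff x y n j + (-1) ^ j * ecoeff x y (Suc n) j) * ?W j)"
    by (intro sum.cong refl) (simp add: row)
  also have "\<dots> = - s * ((\<Sum>j<n. (-1) ^ j * ecoeff x y n j * ?W j) + (\<Sum>j<n. (-1) ^ j * ecoeff x y (Suc n) j * ?W j))"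
    unfolding sum.distrib[symmetric] sum_distrib_left by (intro sum.cong refl) (simp add: algebra_simps)
  finally have off_diag: "(\<Sum>j<n. x * y * A_last x y (Suc n) j * ?W j)
      = - s * ((s * ?H n - s * ?W n) + (- s * ?H (Suc n) + s * ?W (Suc n) - s * of_nat (Suc n) * (x + y) * ?W n))"
    unfolding sum_n sum_Suc_n .
  have s_s: "s * (s * z) = z" for z
    by (simp add: s flip: mult.assoc)
  show ?thesis
    unfolding split diag off_diag by (simp add: algebra_simps s_s del: hop.simps)
qed

section \<open>Summation over \<open>l \<ge> 0\<close>\<close>

definition boundary :: "'a::comm_ring_1 \<Rightarrow> (int \<Rightarrow> 'a) \<Rightarrow> (int \<Rightarrow> 'a) \<Rightarrow> int \<Rightarrow> 'a" where
  "boundary q g h i = g (i - 1) - h (i - 1) + q * h i"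

lemma A_last_transfer_telescoping:
  fixes x y :: "'a::field"
  assumes "x \<noteq> 0" and "y \<noteq> 0"
  shows "x * y * (\<Sum>j<Suc n. A_last x y (Suc n) j * (transfer x y ^^ j) f i)
     = (x * y) ^ Suc n * f (i + int (Suc n))
       + boundary (x * y) (hop (x * y) n f) ((transfer x y ^^ n) f) i
       - boundary (x * y) (hop (x * y) n f) ((transfer x y ^^ n) f) (i + 1)"
  unfolding A_last_transfer[OF assms]
  by (simp add: boundary_def transfer_def algebra_simps)

lemma boundary_eq_0:
  assumes "\<And>i. K < i \<Longrightarrow> f i = 0" and "K + int n < i - 1"
  shows "boundary q (hop q n f) ((transfer x y ^^ n) f) i = 0"
  using assms hop_eq_0[OF assms(1)] funpow_transfer_eq_0[OF assms(1)]
  by (simp add: boundary_def)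

lemma boundary_reflection:
  assumes "q_reflective q g" and "q_reflective q h" and "0 \<le> k"
  shows "boundary q g h (- k) - q ^ nat (k + 1) * boundary q g h (k + 2)
    = q * (h (- k) - q ^ nat (k + 1) * h (k + 2))"
proof -
  have "g (- k - 1) = q ^ nat (k + 1) * g (k + 1)" "h (- k - 1) = q ^ nat (k + 1) * h (k + 1)"
    using q_reflectiveD[OF assms(1), of "k + 1"] q_reflectiveD[OF assms(2), of "k + 1"] assms(3)
    by simp_all
  then show ?thesis
    by (simp add: boundary_def algebra_simps)
qed

lemma sum_A_last_transfer:
  fixes x y :: "'a::field"
  assumes "x \<noteq> 0" and "y \<noteq> 0"
    and "\<And>i. K < i \<Longrightarrow> f i = 0" and "K + int (Suc n) < c + int N"
  shows "x * y * (\<Sum>j<Suc n. A_last x y (Suc n) j * (\<Sum>i<N. (transfer x y ^^ j) f (c + int i)))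
     = (x * y) ^ Suc n * (\<Sum>i<N. f (c + int i + int (Suc n)))
       + boundary (x * y) (hop (x * y) n f) ((transfer x y ^^ n) f) c"
proof -
  define b where "b i = boundary (x * y) (hop (x * y) n f) ((transfer x y ^^ n) f) (c + int i)" for i
  have "x * y * (\<Sum>j<Suc n. A_last x y (Suc n) j * (\<Sum>i<N. (transfer x y ^^ j) f (c + int i)))
      = (\<Sum>i<N. x * y * (\<Sum>j<Suc n. A_last x y (Suc n) j * (transfer x y ^^ j) f (c + int i)))"
    by (simp add: sum_distrib_left mult.assoc sum.swap[of _ "{..<N}"])
  also have "\<dots> = (\<Sum>i<N. (x * y) ^ Suc n * f (c + int i + int (Suc n)) + (b i - b (Suc i)))"
    unfolding A_last_transfer_telescoping[OF assms(1,2)] b_def by (simp add: algebra_simps)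
  also have "\<dots> = (x * y) ^ Suc n * (\<Sum>i<N. f (c + int i + int (Suc n))) + (b 0 - b N)"
    by (simp add: sum.distrib sum_distrib_left sum_lessThan_telescope')
  also have "b N = 0"
  proof -
    have "K + int n < c + int N - 1"
      using assms(4) by simp
    from boundary_eq_0[OF assms(3) this] show ?thesis
      by (simp add: b_def)
  qed
  finally show ?thesis
    by (simp add: b_def)
qed

lemma sum_nonneg_eq_sum_lessThan:
  assumes "\<And>l. int N \<le> l \<Longrightarrow> f l = 0"
  shows "sum_nonneg f = (\<Sum>i<N. f (int i))"
proof -
  have "l \<in> int ` {..<N}" if "0 \<le> l" and "f l \<noteq> 0" for l
  proof -
    have "l < int N"
      using that assms not_le by blast
    then have "l = int (nat l)" and "nat l < N"
      using that(1) by auto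
    then show ?thesis
      by blast
  qed
  then have "{l. 0 \<le> l \<and> f l \<noteq> 0} \<subseteq> int ` {..<N}"
    by blast
  then have "sum_nonneg f = sum f (int ` {..<N})"
    unfolding sum_nonneg_def by (intro sum.mono_neutral_left) auto
  then show ?thesis
    by (simp add: sum.reindex)
qed

lemma sum_nonneg_PPplus:
  assumes "0 \<le> k" and "int M + k < int N"
  shows "sum_nonneg (PPplus x y M k)
    = (\<Sum>i<N. walk x y M (- k + int i)) - (x * y) ^ nat (k + 1) * (\<Sum>i<N. walk x y M (k + 2 + int i))"
proof -
  have "sum_nonneg (PPplus x y M k) = (\<Sum>i<N. PPplus x y M k (int i))"
    using assms by (intro sum_nonneg_eq_sum_lessThan) (simp add: PPplus_eq_walk walk_eq_0)
  then show ?thesis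
    using assms(1) by (simp add: PPplus_eq_walk sum_subtractf sum_distrib_left algebra_simps)
qed

lemma sum_nonneg_PP:
  assumes "int n < c + int N"
  shows "sum_nonneg (\<lambda>l. PP x y n 0 (c + l)) = (\<Sum>i<N. walk x y n (c + int i))"
  using assms by (subst sum_nonneg_eq_sum_lessThan) (simp_all add: PP_eq_walk walk_eq_0)

lemma sum_A_last_walk:
  fixes x y :: "'a::field"
  assumes "x \<noteq> 0" and "y \<noteq> 0" and "int m + int (Suc n) < c + int N"
  shows "x * y * (\<Sum>j<Suc n. A_last x y (Suc n) j * (\<Sum>i<N. walk x y (m + j) (c + int i)))
     = (x * y) ^ Suc n * (\<Sum>i<N. walk x y m (c + int i + int (Suc n)))
       + boundary (x * y) (hop (x * y) n (walk x y m)) (walk x y (m + n)) c"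
  using sum_A_last_transfer[OF assms(1,2), of "int m" "walk x y m"] assms(3)
  by (simp add: walk_eq_0 funpow_transfer_walk)

lemma sum_A_last_PPplus:
  fixes x y :: "'a::field"
  assumes "x \<noteq> 0" and "y \<noteq> 0" and "0 \<le> k" and "int m + int (Suc n) + k < int N"
  defines "Q \<equiv> (x * y) ^ nat (k + 1)"
    and "b \<equiv> boundary (x * y) (hop (x * y) n (walk x y m)) (walk x y (m + n))"
  shows "x * y * (\<Sum>j<Suc n. A_last x y (Suc n) j * sum_nonneg (PPplus x y (m + j) k))
     = (x * y) ^ Suc n * ((\<Sum>i<N. walk x y m (- k + int i + int (Suc n)))
         - Q * (\<Sum>i<N. walk x y m (k + 2 + int i + int (Suc n))))
       + (b (- k) - Q * b (k + 2))"
proof -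
  let ?S = "\<lambda>c. (\<Sum>j<Suc n. A_last x y (Suc n) j * (\<Sum>i<N. walk x y (m + j) (c + int i)))"
  have PPplus_sums: "sum_nonneg (PPplus x y (m + j) k)
      = (\<Sum>i<N. walk x y (m + j) (- k + int i)) - Q * (\<Sum>i<N. walk x y (m + j) (k + 2 + int i))"
    if "j < Suc n" for j
    unfolding Q_def using that assms(3,4) by (intro sum_nonneg_PPplus) auto
  have "(\<Sum>j<Suc n. A_last x y (Suc n) j * sum_nonneg (PPplus x y (m + j) k))
      = (\<Sum>j<Suc n. A_last x y (Suc n) j * ((\<Sum>i<N. walk x y (m + j) (- k + int i))
          - Q * (\<Sum>i<N. walk x y (m + j) (k + 2 + int i))))"
    by (intro sum.cong refl) (simp add: PPplus_sums)
  also have "\<dots> = ?S (- k) - Q * ?S (k + 2)"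
    by (simp add: sum_distrib_left right_diff_distrib sum_subtractf mult.left_commute del: sum.lessThan_Suc)
  finally have split: "x * y * (\<Sum>j<Suc n. A_last x y (Suc n) j * sum_nonneg (PPplus x y (m + j) k))
      = x * y * ?S (- k) - Q * (x * y * ?S (k + 2))"
    by (simp only: right_diff_distrib mult.left_commute)
  have S_eq: "x * y * ?S c = (x * y) ^ Suc n * (\<Sum>i<N. walk x y m (c + int i + int (Suc n))) + b c"
    if "- k \<le> c" for c
    unfolding b_def using that assms(4) by (intro sum_A_last_walk[OF assms(1,2)]) simp
  show ?thesis
    using split S_eq[of "- k"] S_eq[of "k + 2"] assms(3) by (simp add: algebra_simps del: sum.lessThan_Suc)
qed

theorem lemma9:
  fixes x y :: "'a::field" and m n :: nat and k :: int
  assumes "x \<noteq> 0" and "y \<noteq> 0"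
    and "1 \<le> n" and "m \<le> n" and "0 \<le> k"
  shows "(\<Sum>j<n. A_last x y n j * sum_nonneg (\<lambda>l. PPplus x y (m + j) k l))
       = PPplus x y (m + n - 1) k 0
         + (x * y) ^ (n - 1) * sum_nonneg (\<lambda>l. PP x y m 0 (int n - k + l))"
proof -
  obtain n' where n: "n = Suc n'"
    using assms(3) by (cases n) auto
  define N where "N = m + n + nat k + 1"
  define Q where "Q = (x * y) ^ nat (k + 1)"
  define b where "b = boundary (x * y) (hop (x * y) n' (walk x y m)) (walk x y (m + n'))"
  have "x * y * (\<Sum>j<n. A_last x y n j * sum_nonneg (PPplus x y (m + j) k))
      = (x * y) ^ n * ((\<Sum>i<N. walk x y m (- k + int i + int n))
          - Q * (\<Sum>i<N. walk x y m (k + 2 + int i + int n))) + (b (- k) - Q * b (k + 2))"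
    unfolding n Q_def b_def using assms(5) by (intro sum_A_last_PPplus[OF assms(1,2)]) (simp_all add: N_def n)
  moreover have "(\<Sum>i<N. walk x y m (k + 2 + int i + int n)) = 0"
    using assms(4,5) by (intro sum.neutral ballI walk_eq_0) simp
  moreover have "b (- k) - Q * b (k + 2) = x * y * PPplus x y (m + n - 1) k 0"
    using boundary_reflection[OF q_reflective_hop q_reflective_walk assms(5), OF q_reflective_walk]
      PPplus_eq_walk[of 0 k x y "m + n'"] assms(5)
    by (simp add: b_def Q_def n)
  moreover have "sum_nonneg (\<lambda>l. PP x y m 0 (int n - k + l)) = (\<Sum>i<N. walk x y m (- k + int i + int n))"
    using sum_nonneg_PP[of m "int n - k" N] assms(5) by (simp add: N_def algebra_simps)
  ultimately have "x * y * (\<Sum>j<n. A_last x y n j * sum_nonneg (PPplus x y (m + j) k))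
      = x * y * (PPplus x y (m + n - 1) k 0 + (x * y) ^ (n - 1) * sum_nonneg (\<lambda>l. PP x y m 0 (int n - k + l)))"
    by (simp add: n distrib_left mult.left_commute)
  then show ?thesis
    using assms(1,2) by simp
qed

end
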